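(* Let $\tilde C(q)=\sum_{g\ge3}\tilde c_gq^g$, where $\tilde c_g$ is the number of NSG-compositions $x_1+\cdots+x_{m-1}$ of genus $g$ with maximum $3$ and last part $x_{m-1}=3$. Then the generating series $\sum_g a_gq^g$, where $a_g$ is the number of NSG-compositions of genus $g$ with maximum exactly $3$, equals $\dfrac{\tilde C(q)}{1-q-q^2}$. Consequently the generating series of all NSG-compositions with maximum at most $3$ (including the empty one) is $\dfrac{1+\tilde C(q)}{1-q-q^2}$.
   Context: An NSG-composition is a composition $x_1+\cdots+x_{m-1}$ of positive integers ($m\ge1$, empty composition allowed) satisfying $x_{s+t}\le x_s+x_t$ and $x_{m-s-t}\le x_{m-s}+x_{m-t}+1$ for all $s,t\ge1$, $s+t<m$ (equivalently, the Kunz vector of a numerical semigroup of multiplicity $m$); its genus is $\sum x_j$ and its maximum is $\max_jx_j$. Equivalently, $\tilde c_g$ is the number of numerical semigroups of genus $g$ with Frobenius number $3m-1$, $m$ the multiplicity. *)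

theory Defs
  imports "HOL-Computational_Algebra.Formal_Power_Series"
begin

text \<open>A composition x_1 + ... + x_(m-1) is represented by the list xs = [x_1,...,x_(m-1)],
  so m = length xs + 1 and x_j = xs ! (j - 1).\<close>

definition comp_part :: "nat list \<Rightarrow> nat \<Rightarrow> nat" where
  "comp_part xs j = xs ! (j - 1)"

definition nsg_composition :: "nat list \<Rightarrow> bool" where
  "nsg_composition xs \<longleftrightarrow>
     (\<forall>x\<in>set xs. x > 0) \<and>
     (let m = length xs + 1 in
       \<forall>s t. 1 \<le> s \<longrightarrow> 1 \<le> t \<longrightarrow> s + t < m \<longrightarrow>
         comp_part xs (s + t) \<le> comp_part xs s + comp_part xs t \<and>
         comp_part xs (m - s - t) \<le> comp_part xs (m - s) + comp_part xs (m - t) + 1)"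

definition genus :: "nat list \<Rightarrow> nat" where
  "genus xs = sum_list xs"

definition comp_max :: "nat list \<Rightarrow> nat" where
  "comp_max xs = Max (set xs)"

definition ctilde :: "nat \<Rightarrow> nat" where
  "ctilde g = card {xs. nsg_composition xs \<and> genus xs = g \<and> xs \<noteq> [] \<and>
                        comp_max xs = 3 \<and> last xs = 3}"

definition a_max3 :: "nat \<Rightarrow> nat" where
  "a_max3 g = card {xs. nsg_composition xs \<and> genus xs = g \<and> xs \<noteq> [] \<and> comp_max xs = 3}"

definition b_le3 :: "nat \<Rightarrow> nat" where
  "b_le3 g = card {xs. nsg_composition xs \<and> genus xs = g \<and> (\<forall>x\<in>set xs. x \<le> 3)}"

end

theory Submission
  imports Defs
begin

text \<open>When all parts lie in {1,2,3}, the second Kunz inequality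
  x_(m-s-t) \<le> x_(m-s) + x_(m-t) + 1 holds automatically (3 \<le> 1 + 1 + 1), so an
  NSG-composition with maximum at most 3 is just a subadditive sequence. Appending a part 1
  or 2 to a subadditive sequence of positive parts keeps it subadditive, since the only new
  inequality compares the new part with a sum of two old ones, which is at least 2. Sorting
  the compositions by their last part therefore gives a_g = c~_g + a_(g-1) + a_(g-2), and
  likewise for all compositions with maximum at most 3, with an extra 1 at g = 0 for the
  empty composition. Such a recurrence is equivalent to division by 1 - q - q^2.\<close>

lemma fps_eq_div_of_fib_rec:
  fixes f e :: "nat \<Rightarrow> 'a::field"
  assumes "\<And>n. f n = e n + (if 1 \<le> n then f (n - 1) else 0) + (if 2 \<le> n then f (n - 2) else 0)"
  shows "Abs_fps f = Abs_fps e / (1 - fps_X - fps_X ^ 2)"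
proof -
  let ?D = "1 - fps_X - fps_X ^ 2 :: 'a fps"
  have "fps_nth ?D 0 = 1" by simp
  hence D_nz: "?D \<noteq> 0" by (metis fps_zero_nth zero_neq_one)
  have "Abs_fps f * ?D = Abs_fps e"
  proof (rule fps_ext)
    fix n
    have "fps_nth (Abs_fps f * ?D) n = f n - fps_nth (fps_X * Abs_fps f) n - fps_nth (fps_X ^ 2 * Abs_fps f) n"
      by (simp add: algebra_simps)
    also have "\<dots> = e n"
      using assms[of n] by (simp add: fps_X_mult_nth fps_X_power_mult_nth)
    finally show "fps_nth (Abs_fps f * ?D) n = fps_nth (Abs_fps e) n" by simp
  qed
  thus ?thesis using D_nz by (metis nonzero_mult_div_cancel_right)
qed

definition subadditive_list :: "nat list \<Rightarrow> bool" where
  "subadditive_list xs \<longleftrightarrow> (\<forall>i j. i + j + 1 < length xs \<longrightarrow> xs ! (i + j + 1) \<le> xs ! i + xs ! j)"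

lemma nsg_composition_iff_subadditive:
  assumes "\<forall>x\<in>set xs. x \<le> 3"
  shows "nsg_composition xs \<longleftrightarrow> (\<forall>x\<in>set xs. 0 < x) \<and> subadditive_list xs"
proof
  assume "nsg_composition xs"
  then have pos: "\<forall>x\<in>set xs. 0 < x"
    and sub: "\<And>s t. 1 \<le> s \<Longrightarrow> 1 \<le> t \<Longrightarrow> s + t \<le> length xs \<Longrightarrow>
                xs ! (s + t - 1) \<le> xs ! (s - 1) + xs ! (t - 1)"
    unfolding nsg_composition_def comp_part_def Let_def by auto
  have "xs ! (i + j + 1) \<le> xs ! i + xs ! j" if "i + j + 1 < length xs" for i j
    using sub[of "Suc i" "Suc j"] that by simp
  with pos show "(\<forall>x\<in>set xs. 0 < x) \<and> subadditive_list xs"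
    unfolding subadditive_list_def by blast
next
  assume H: "(\<forall>x\<in>set xs. 0 < x) \<and> subadditive_list xs"
  have pos: "0 < xs ! i" and le3: "xs ! i \<le> 3" if "i < length xs" for i
    using H assms that nth_mem by blast+
  show "nsg_composition xs"
    unfolding nsg_composition_def comp_part_def Let_def
  proof (intro conjI allI impI)
    fix s t assume st: "1 \<le> s" "1 \<le> t" "s + t < length xs + 1"
    show "xs ! (s + t - 1) \<le> xs ! (s - 1) + xs ! (t - 1)"
    proof -
      obtain i j where "s = i + 1" "t = j + 1" using st by (metis le_add_diff_inverse2)
      thus ?thesis using H st unfolding subadditive_list_def by simp
    qed
    have "length xs - (s + t) < length xs" "length xs - s < length xs" "length xs - t < length xs"
      using st by auto
    then have "xs ! (length xs - (s + t)) \<le> 3" "1 \<le> xs ! (length xs - s)" "1 \<le> xs ! (length xs - t)"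
      using le3 pos by (auto simp: Suc_le_eq)
    then show "xs ! (length xs + 1 - s - t - 1)
        \<le> xs ! (length xs + 1 - s - 1) + xs ! (length xs + 1 - t - 1) + 1"
      by simp
  qed (use H in blast)
qed

lemma subadditive_list_snoc:
  assumes pos: "\<forall>x\<in>set xs. 0 < x" and y: "y \<le> 2"
  shows "subadditive_list (xs @ [y]) \<longleftrightarrow> subadditive_list xs"
proof -
  have new: "y \<le> xs ! i + xs ! j" if "i + j + 1 = length xs" for i j
  proof -
    have "0 < xs ! i" "0 < xs ! j" using pos that by auto
    with y show ?thesis by linarith
  qed
  have "(i + j + 1 < length (xs @ [y]) \<longrightarrow>
          (xs @ [y]) ! (i + j + 1) \<le> (xs @ [y]) ! i + (xs @ [y]) ! j)
        \<longleftrightarrow> (i + j + 1 < length xs \<longrightarrow> xs ! (i + j + 1) \<le> xs ! i + xs ! j)" for i j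
    using new[of i j] by (cases "i + j + 1 < length xs") (auto simp: nth_append)
  then show ?thesis unfolding subadditive_list_def by simp
qed

definition nsg_le3 :: "nat list \<Rightarrow> bool" where
  "nsg_le3 xs \<longleftrightarrow> nsg_composition xs \<and> (\<forall>x\<in>set xs. x \<le> 3)"

lemma nsg_le3_iff: "nsg_le3 xs \<longleftrightarrow> set xs \<subseteq> {1..3} \<and> subadditive_list xs"
proof -
  have "set xs \<subseteq> {1..3} \<longleftrightarrow> (\<forall>x\<in>set xs. 0 < x) \<and> (\<forall>x\<in>set xs. x \<le> 3)"
    by (auto simp: Suc_le_eq)
  then show ?thesis unfolding nsg_le3_def using nsg_composition_iff_subadditive by blast
qed

lemma nsg_le3_snoc:
  assumes "y \<in> {1, 2}"
  shows "nsg_le3 (xs @ [y]) \<longleftrightarrow> nsg_le3 xs"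
proof -
  have "set (xs @ [y]) \<subseteq> {1..3} \<longleftrightarrow> set xs \<subseteq> {1..3}" using assms by auto
  moreover have "set xs \<subseteq> {1..3} \<Longrightarrow> subadditive_list (xs @ [y]) \<longleftrightarrow> subadditive_list xs"
    using assms by (intro subadditive_list_snoc) auto
  ultimately show ?thesis unfolding nsg_le3_iff by blast
qed

definition nsg_le3_of_genus :: "(nat list \<Rightarrow> bool) \<Rightarrow> nat \<Rightarrow> nat list set" where
  "nsg_le3_of_genus P g = {xs. nsg_le3 xs \<and> sum_list xs = g \<and> P xs}"

lemma length_le_sum_list: "\<forall>x\<in>set xs. 0 < (x::nat) \<Longrightarrow> length xs \<le> sum_list xs"
  by (induction xs) auto

lemma finite_nsg_le3_of_genus: "finite (nsg_le3_of_genus P g)"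
proof (rule finite_subset)
  show "nsg_le3_of_genus P g \<subseteq> {xs. set xs \<subseteq> {1..3} \<and> length xs \<le> g}"
    using length_le_sum_list by (fastforce simp: nsg_le3_of_genus_def nsg_le3_iff)
  show "finite {xs. set xs \<subseteq> {1..3::nat} \<and> length xs \<le> g}"
    by (rule finite_lists_length_le) simp
qed

lemma last_le_sum_list: "xs \<noteq> [] \<Longrightarrow> last xs \<le> sum_list (xs :: nat list)"
  by (rule member_le_sum_list) simp_all

lemma card_nsg_le3_of_genus_last:
  assumes P_snoc: "\<And>xs. P (xs @ [y]) = P xs" and y: "y \<in> {1, 2}"
  shows "card {xs \<in> nsg_le3_of_genus P n. xs \<noteq> [] \<and> last xs = y}
           = (if y \<le> n then card (nsg_le3_of_genus P (n - y)) else 0)"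
proof (cases "y \<le> n")
  case True
  then obtain g where n: "n = g + y" using le_Suc_ex add.commute by metis
  have "{xs \<in> nsg_le3_of_genus P n. xs \<noteq> [] \<and> last xs = y}
          = (\<lambda>xs. xs @ [y]) ` nsg_le3_of_genus P g"
  proof (rule set_eqI)
    fix xs
    show "xs \<in> {xs \<in> nsg_le3_of_genus P n. xs \<noteq> [] \<and> last xs = y}
            \<longleftrightarrow> xs \<in> (\<lambda>xs. xs @ [y]) ` nsg_le3_of_genus P g"
    proof (cases xs rule: rev_exhaust)
      case (snoc zs z)
      have "zs @ [z] \<in> nsg_le3_of_genus P n \<and> z = y \<longleftrightarrow> zs \<in> nsg_le3_of_genus P g \<and> z = y"
        using nsg_le3_snoc[OF y] P_snoc by (auto simp: nsg_le3_of_genus_def n)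
      then show ?thesis using snoc by auto
    qed auto
  qed
  moreover have "inj (\<lambda>xs. xs @ [y])" by (rule injI) simp
  ultimately show ?thesis using True n by (simp add: card_image inj_on_subset)
next
  case False
  then have "{xs \<in> nsg_le3_of_genus P n. xs \<noteq> [] \<and> last xs = y} = {}"
    using last_le_sum_list by (fastforce simp: nsg_le3_of_genus_def)
  then show ?thesis using False by (simp only: card.empty if_False)
qed

lemma card_nsg_le3_of_genus_rec:
  assumes P_snoc: "\<And>xs y. y \<in> {1, 2} \<Longrightarrow> P (xs @ [y]) = P xs"
  shows "card (nsg_le3_of_genus P n)
           = card {xs \<in> nsg_le3_of_genus P n. xs = []}
             + card {xs \<in> nsg_le3_of_genus P n. xs \<noteq> [] \<and> last xs = 3}
             + (if 1 \<le> n then card (nsg_le3_of_genus P (n - 1)) else 0)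
             + (if 2 \<le> n then card (nsg_le3_of_genus P (n - 2)) else 0)"
proof -
  let ?S = "nsg_le3_of_genus P n"
  let ?E = "{xs \<in> ?S. xs = []}"
  let ?L = "\<lambda>y. {xs \<in> ?S. xs \<noteq> [] \<and> last xs = y}"
  have "last xs \<in> {1, 2, 3}" if "xs \<in> ?S" "xs \<noteq> []" for xs
  proof -
    have "set xs \<subseteq> {1..3}" using that(1) by (simp add: nsg_le3_of_genus_def nsg_le3_iff)
    moreover have "{1..3} = {1, 2, 3 :: nat}" by (auto simp: eval_nat_numeral)
    ultimately show ?thesis using last_in_set[OF that(2)] by blast
  qed
  then have partition: "?S = ?E \<union> ?L 3 \<union> ?L 1 \<union> ?L 2"
    by auto
  have fin: "finite {xs \<in> ?S. Q xs}" for Q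
    using finite_nsg_le3_of_genus by simp
  have "card ?S = card (?E \<union> ?L 3 \<union> ?L 1 \<union> ?L 2)"
    by (rule arg_cong[OF partition])
  also have "\<dots> = card (?E \<union> ?L 3 \<union> ?L 1) + card (?L 2)"
    by (rule card_Un_disjoint) (auto simp: fin)
  also have "card (?E \<union> ?L 3 \<union> ?L 1) = card (?E \<union> ?L 3) + card (?L 1)"
    by (rule card_Un_disjoint) (auto simp: fin)
  also have "card (?E \<union> ?L 3) = card ?E + card (?L 3)"
    by (rule card_Un_disjoint) (auto simp: fin)
  finally have "card ?S = card ?E + card (?L 3) + card (?L 1) + card (?L 2)" .
  then show ?thesis
    using card_nsg_le3_of_genus_last[of P 1 n] card_nsg_le3_of_genus_last[of P 2 n] P_snoc
    by simp
qed

lemma comp_max_eq_3_iff: "xs \<noteq> [] \<and> comp_max xs = 3 \<longleftrightarrow> 3 \<in> set xs \<and> (\<forall>x\<in>set xs. x \<le> 3)"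
  by (cases "xs = []") (auto simp: comp_max_def Max_eq_iff)

lemma a_max3_eq_card: "a_max3 g = card (nsg_le3_of_genus (\<lambda>xs. 3 \<in> set xs) g)"
  unfolding a_max3_def nsg_le3_of_genus_def nsg_le3_def genus_def
  by (rule arg_cong[where f = card]) (use comp_max_eq_3_iff in blast)

lemma b_le3_eq_card: "b_le3 g = card (nsg_le3_of_genus (\<lambda>_. True) g)"
  unfolding b_le3_def nsg_le3_of_genus_def nsg_le3_def genus_def by meson

lemma ctilde_eq_card:
  assumes "\<And>xs. 3 \<in> set xs \<Longrightarrow> P xs"
  shows "ctilde g = card {xs \<in> nsg_le3_of_genus P g. xs \<noteq> [] \<and> last xs = 3}"
proof -
  have "xs \<noteq> [] \<and> comp_max xs = 3 \<and> last xs = 3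
          \<longleftrightarrow> (\<forall>x\<in>set xs. x \<le> 3) \<and> P xs \<and> xs \<noteq> [] \<and> last xs = 3" for xs
  proof -
    have "xs \<noteq> [] \<Longrightarrow> last xs = 3 \<Longrightarrow> 3 \<in> set xs" by (metis last_in_set)
    then show ?thesis using comp_max_eq_3_iff[of xs] assms[of xs] by blast
  qed
  then show ?thesis
    unfolding ctilde_def nsg_le3_of_genus_def nsg_le3_def genus_def
    by (intro arg_cong[where f = card]) auto
qed

lemma ctilde_eq_0:
  assumes "g < 3"
  shows "ctilde g = 0"
proof -
  have "{xs. nsg_composition xs \<and> genus xs = g \<and> xs \<noteq> [] \<and> comp_max xs = 3 \<and> last xs = 3} = {}"
    using last_le_sum_list assms by (force simp: genus_def)
  then show ?thesis unfolding ctilde_def by (simp only: card.empty)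
qed

lemma a_max3_rec:
  "a_max3 n = ctilde n + (if 1 \<le> n then a_max3 (n - 1) else 0) + (if 2 \<le> n then a_max3 (n - 2) else 0)"
proof -
  have "\<And>xs y. y \<in> {1, 2} \<Longrightarrow> 3 \<in> set (xs @ [y]) \<longleftrightarrow> 3 \<in> set (xs :: nat list)" by auto
  from card_nsg_le3_of_genus_rec[OF this, of n] show ?thesis
    using ctilde_eq_card[of "\<lambda>xs. 3 \<in> set xs" n] by (simp add: a_max3_eq_card nsg_le3_of_genus_def)
qed

lemma b_le3_rec:
  "b_le3 n = (if n = 0 then 1 else 0) + ctilde n
             + (if 1 \<le> n then b_le3 (n - 1) else 0) + (if 2 \<le> n then b_le3 (n - 2) else 0)"
proof -
  have "nsg_le3 []" by (simp add: nsg_le3_iff subadditive_list_def)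
  then have "{xs \<in> nsg_le3_of_genus (\<lambda>_. True) n. xs = []} = (if n = 0 then {[]} else {})"
    by (auto simp: nsg_le3_of_genus_def)
  then have "card {xs \<in> nsg_le3_of_genus (\<lambda>_. True) n. xs = []} = (if n = 0 then 1 else 0)"
    by simp
  moreover have "ctilde n = card {xs \<in> nsg_le3_of_genus (\<lambda>_. True) n. xs \<noteq> [] \<and> last xs = 3}"
    by (rule ctilde_eq_card) simp
  ultimately show ?thesis
    unfolding b_le3_eq_card by (subst card_nsg_le3_of_genus_rec) simp_all
qed

theorem proposition13p1:
  fixes Ct :: "rat fps"
  defines "Ct \<equiv> Abs_fps (\<lambda>g. if 3 \<le> g then of_nat (ctilde g) else 0)"
  shows "Abs_fps (\<lambda>g. of_nat (a_max3 g)) = Ct / (1 - fps_X - fps_X ^ 2) \<and>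
         Abs_fps (\<lambda>g. of_nat (b_le3 g)) = (1 + Ct) / (1 - fps_X - fps_X ^ 2)"
proof
  have Ct: "Ct = Abs_fps (\<lambda>g. of_nat (ctilde g))"
    unfolding Ct_def by (rule fps_ext) (simp add: ctilde_eq_0)
  show "Abs_fps (\<lambda>g. of_nat (a_max3 g)) = Ct / (1 - fps_X - fps_X ^ 2)"
    unfolding Ct by (rule fps_eq_div_of_fib_rec) (subst a_max3_rec, simp)
  have "1 + Ct = Abs_fps (\<lambda>g. of_nat ((if g = 0 then 1 else 0) + ctilde g))"
    unfolding Ct by (rule fps_ext) simp
  then show "Abs_fps (\<lambda>g. of_nat (b_le3 g)) = (1 + Ct) / (1 - fps_X - fps_X ^ 2)"
    by (simp only:) (rule fps_eq_div_of_fib_rec, subst b_le3_rec, simp)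
qed

end
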